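(* Let $\psi$ be a CNF formula with only positive literals, with clauses $C_1,\dots,C_m$ each consisting of three distinct variables, and variables $x_1,\dots,x_p$, in which every variable appears in at least $3$ clauses. Let $G$ be the graph constructed as follows: (1) for each variable $x_i$ create a cycle $D_i$ whose number of vertices equals the number of clauses containing $x_i$, and, for each clause containing $x_i$, designate a distinct vertex of $D_i$ as corresponding to that clause; (2) add a vertex $a$ adjacent to every vertex of all cycles $D_1,\dots,D_p$; (3) subdivide every edge of the cycles and every edge incident to $a$ exactly twice (replacing it by a path with three edges); (4) for each clause $C_i=\{x_j,x_k,x_\ell\}$ add a triangle on new vertices $u_{ij},u_{ik},u_{i\ell}$ and make $u_{ij}$ adjacent to the vertex of $D_j$ corresponding to $C_i$, $u_{ik}$ adjacent to the vertex of $D_k$ corresponding to $C_i$, and $u_{i\ell}$ adjacent to the vertex of $D_\ell$ corresponding to $C_i$. If $G$ has a $1$-shallow topological minor of density $\frac{5m}{2m+1}$, then $\psi$ has an assignment in which every clause contains exactly one true variable.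
   Context: A graph $H$ is a $1$-shallow topological minor of $G$ if some graph obtained from $H$ by subdividing each edge at most twice is isomorphic to a subgraph of $G$. The density of $H$ is $\|H\|/|H|$ (number of edges divided by number of vertices). *)

theory Defs
  imports Main Complex_Main
begin

definition simple_graph :: "'v set \<Rightarrow> 'v set set \<Rightarrow> bool" where
  "simple_graph V E \<longleftrightarrow> finite V \<and>
     (\<forall>e\<in>E. \<exists>x y. x \<noteq> y \<and> x \<in> V \<and> y \<in> V \<and> e = {x, y})"

definition inner :: "'v list \<Rightarrow> 'v set" where
  "inner xs = set (butlast (tl xs))"

(* H = (VH, EH) is a 1-shallow topological minor of G = (V, E): some graph obtained from H
   by subdividing each edge at most twice is isomorphic to a subgraph of G. *)
definition one_shallow_top_minor ::
  "'h set \<Rightarrow> 'h set set \<Rightarrow> 'v set \<Rightarrow> 'v set set \<Rightarrow> bool" where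
  "one_shallow_top_minor VH EH V E \<longleftrightarrow>
     (\<exists>(\<phi>::'h \<Rightarrow> 'v) (P::'h set \<Rightarrow> 'v list).
        inj_on \<phi> VH \<and> \<phi> ` VH \<subseteq> V \<and>
        (\<forall>e\<in>EH.
           2 \<le> length (P e) \<and> length (P e) \<le> 4 \<and> distinct (P e) \<and>
           set (P e) \<subseteq> V \<and>
           \<phi> ` e = {hd (P e), last (P e)} \<and>
           (\<forall>k. Suc k < length (P e) \<longrightarrow> {P e ! k, P e ! Suc k} \<in> E) \<and>
           inner (P e) \<inter> \<phi> ` VH = {}) \<and>
        (\<forall>e\<in>EH. \<forall>e'\<in>EH. e \<noteq> e' \<longrightarrow> inner (P e) \<inter> inner (P e') = {}))"

definition density :: "'v set \<Rightarrow> 'v set set \<Rightarrow> real" where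
  "density V E = real (card E) / real (card V)"

(* Clauses are indexed 0..m-1 (cl i = set of variables of clause i), variables 0..p-1.
   Cyc j t      : t-th vertex (t < deg j) of the cycle D_j
   SubC j t s   : s-th subdivision vertex (s < 2) of the cycle edge Cyc j t -- Cyc j ((t+1) mod deg j)
   SubA j t s   : s-th subdivision vertex (s < 2) of the edge a -- Cyc j t
   Tri i j      : triangle vertex u_ij of clause i for variable j \<in> cl i *)
datatype gvert = Apex | Cyc nat nat | SubC nat nat nat | SubA nat nat nat | Tri nat nat

definition deg :: "nat \<Rightarrow> (nat \<Rightarrow> nat set) \<Rightarrow> nat \<Rightarrow> nat" where
  "deg m cl j = card {i. i < m \<and> j \<in> cl i}"

definition G_verts :: "nat \<Rightarrow> nat \<Rightarrow> (nat \<Rightarrow> nat set) \<Rightarrow> gvert set" where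
  "G_verts m p cl =
     {Apex}
     \<union> {Cyc j t | j t. j < p \<and> t < deg m cl j}
     \<union> {SubC j t s | j t s. j < p \<and> t < deg m cl j \<and> s < 2}
     \<union> {SubA j t s | j t s. j < p \<and> t < deg m cl j \<and> s < 2}
     \<union> {Tri i j | i j. i < m \<and> j \<in> cl i}"

(* ord j t = index of the clause to which the t-th vertex of D_j corresponds *)
definition G_edges ::
  "nat \<Rightarrow> nat \<Rightarrow> (nat \<Rightarrow> nat set) \<Rightarrow> (nat \<Rightarrow> nat \<Rightarrow> nat) \<Rightarrow> gvert set set" where
  "G_edges m p cl ord =
     {{Cyc j t, SubC j t 0} | j t. j < p \<and> t < deg m cl j}
     \<union> {{SubC j t 0, SubC j t 1} | j t. j < p \<and> t < deg m cl j}
     \<union> {{SubC j t 1, Cyc j ((t + 1) mod deg m cl j)} | j t. j < p \<and> t < deg m cl j}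
     \<union> {{Apex, SubA j t 0} | j t. j < p \<and> t < deg m cl j}
     \<union> {{SubA j t 0, SubA j t 1} | j t. j < p \<and> t < deg m cl j}
     \<union> {{SubA j t 1, Cyc j t} | j t. j < p \<and> t < deg m cl j}
     \<union> {{Tri i j, Tri i k} | i j k. i < m \<and> j \<in> cl i \<and> k \<in> cl i \<and> j \<noteq> k}
     \<union> {{Tri i j, Cyc j t} | i j t. i < m \<and> j \<in> cl i \<and> j < p \<and> t < deg m cl j \<and> ord j t = i}"

end

theory Submission imports Defs begin

(* A branch vertex of H has at most as many
   edges as its image has neighbours in G: at most 4 on the cycles, at most 3 elsewhere, except
   at the apex a. Charge every half-edge of H to a clause: half-edges at a branch vertex x \<noteq> a
   to the clause of x, half-edges at a to the clause of the spoke their path starts on. If a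
   clause contains n branch vertices other than a, then (2m+1) times its charge is at most
   10 + 10mn, with equality only if n = 2 and both are cycle vertices of full degree; three of
   them would have to route the three triangle vertices of the clause in pairs through
   internally disjoint paths with at most two internal vertices. Summing over the clauses, the
   density 5m/(2m+1) forces equality everywhere (and forces a to be a branch vertex, since
   otherwise the density is at most 2). The path leaving a cycle vertex of full degree along
   the cycle must run on to the next cycle vertex, so each cycle D_j lies entirely inside or
   entirely outside the branch set, and making x_j true iff D_j lies outside leaves exactly one
   true variable in every clause. *)

lemma inner_rev [simp]: "inner (rev xs) = inner xs"
proof -
  have "tl (rev xs) = rev (butlast xs)" by (metis butlast_rev rev_rev_ident)
  then show ?thesis unfolding inner_def by (simp add: butlast_tl)
qed

lemma nth_mem_inner: "0 < k \<Longrightarrow> Suc k < length xs \<Longrightarrow> xs ! k \<in> inner xs"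
proof -
  assume "0 < k" "Suc k < length xs"
  then have "butlast (tl xs) ! (k - 1) = xs ! k" "k - 1 < length (butlast (tl xs))"
    by (simp_all add: nth_butlast nth_tl)
  then show ?thesis unfolding inner_def by (metis nth_mem)
qed

lemma card_inner_le: "card (inner xs) \<le> length xs - 2"
  unfolding inner_def by (metis card_length length_butlast length_tl diff_diff_left one_add_one)

lemma rev_path_edge:
  assumes "\<And>k. Suc k < length xs \<Longrightarrow> {xs ! k, xs ! Suc k} \<in> E" and "Suc k < length xs"
  shows "{rev xs ! k, rev xs ! Suc k} \<in> E"
proof -
  let ?k = "length xs - 2 - k"
  have "rev xs ! k = xs ! Suc ?k" "rev xs ! Suc k = xs ! ?k"
    using assms(2) by (simp_all add: rev_nth Suc_diff_Suc numeral_2_eq_2)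
  moreover have "{xs ! ?k, xs ! Suc ?k} \<in> E" using assms by simp
  ultimately show ?thesis by (simp add: insert_commute)
qed

lemma card_eq_sum_card_fibres:
  assumes "finite S" "finite T" "g ` S \<subseteq> T"
  shows "card S = (\<Sum>y\<in>T. card {x \<in> S. g x = y})"
  using sum.group[OF assms, of "\<lambda>_. 1 :: nat"] by simp

locale shallow_embedding =
  fixes VH :: "'h set" and EH :: "'h set set" and V :: "'v set" and E :: "'v set set"
    and \<phi> :: "'h \<Rightarrow> 'v" and P :: "'h set \<Rightarrow> 'v list"
  assumes simple: "simple_graph VH EH"
    and inj_branch: "inj_on \<phi> VH" and branch_subset: "\<phi> ` VH \<subseteq> V"
    and path_length: "e \<in> EH \<Longrightarrow> 2 \<le> length (P e) \<and> length (P e) \<le> 4"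
    and path_distinct: "e \<in> EH \<Longrightarrow> distinct (P e)"
    and path_ends: "e \<in> EH \<Longrightarrow> \<phi> ` e = {hd (P e), last (P e)}"
    and path_edge: "e \<in> EH \<Longrightarrow> Suc k < length (P e) \<Longrightarrow> {P e ! k, P e ! Suc k} \<in> E"
    and path_inner: "e \<in> EH \<Longrightarrow> inner (P e) \<inter> \<phi> ` VH = {}"
    and inner_disjoint: "e \<in> EH \<Longrightarrow> e' \<in> EH \<Longrightarrow> e \<noteq> e' \<Longrightarrow> inner (P e) \<inter> inner (P e') = {}"

lemma one_shallow_top_minorE:
  assumes "one_shallow_top_minor VH EH V E" and "simple_graph VH EH"
  obtains \<phi> P where "shallow_embedding VH EH V E \<phi> P"
proof -
  obtain \<phi> P where "inj_on \<phi> VH" "\<phi> ` VH \<subseteq> V"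
    and "\<forall>e\<in>EH. 2 \<le> length (P e) \<and> length (P e) \<le> 4 \<and> distinct (P e) \<and> set (P e) \<subseteq> V \<and>
           \<phi> ` e = {hd (P e), last (P e)} \<and>
           (\<forall>k. Suc k < length (P e) \<longrightarrow> {P e ! k, P e ! Suc k} \<in> E) \<and> inner (P e) \<inter> \<phi> ` VH = {}"
    and "\<forall>e\<in>EH. \<forall>e'\<in>EH. e \<noteq> e' \<longrightarrow> inner (P e) \<inter> inner (P e') = {}"
    using assms(1) unfolding one_shallow_top_minor_def by (elim exE conjE) (rule that)
  then have "shallow_embedding VH EH V E \<phi> P"
    using assms(2) by unfold_locales simp_all
  then show thesis by (rule that)
qed

context shallow_embedding
begin

abbreviation branch :: "'v set" where "branch \<equiv> \<phi> ` VH"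

lemma edge_doubleton: "e \<in> EH \<Longrightarrow> \<exists>x y. x \<noteq> y \<and> x \<in> VH \<and> y \<in> VH \<and> e = {x, y}"
  using simple unfolding simple_graph_def by blast

lemma finite_VH: "finite VH"
  using simple unfolding simple_graph_def by blast

lemma finite_EH: "finite EH"
proof -
  have "EH \<subseteq> Pow VH" using edge_doubleton by fastforce
  then show ?thesis using finite_VH finite_subset by auto
qed

lemma card_branch: "card branch = card VH"
  using inj_branch by (simp add: card_image)

definition half_edges :: "('h set \<times> 'h) set" where
  "half_edges = (SIGMA e:EH. e)"

lemma mem_half_edges [simp]: "(e, h) \<in> half_edges \<longleftrightarrow> e \<in> EH \<and> h \<in> e"
  unfolding half_edges_def by blast

lemma half_edge_vertex: "(e, h) \<in> half_edges \<Longrightarrow> h \<in> VH"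
  using edge_doubleton by fastforce

lemma half_edge_other_end:
  assumes "(e, h) \<in> half_edges"
  obtains h' where "h' \<in> VH" "h' \<noteq> h" "e = {h, h'}"
proof -
  obtain x y where "x \<noteq> y" "x \<in> VH" "y \<in> VH" "e = {x, y}"
    using edge_doubleton assms by fastforce
  then show thesis using that assms by (cases "h = x") (auto simp: insert_commute)
qed

lemma finite_half_edges: "finite half_edges"
  unfolding half_edges_def using finite_EH finite_VH edge_doubleton by blast

lemma card_half_edges: "card half_edges = 2 * card EH"
proof -
  have "card e = 2" if "e \<in> EH" for e
    using edge_doubleton[OF that] by auto
  moreover have "finite e" if "e \<in> EH" for e
    using edge_doubleton[OF that] by auto
  ultimately show ?thesis unfolding half_edges_def using finite_EH by simp
qed

definition path_from :: "'h set \<times> 'h \<Rightarrow> 'v list" where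
  "path_from = (\<lambda>(e, h). if hd (P e) = \<phi> h then P e else rev (P e))"

definition first_step :: "'h set \<times> 'h \<Rightarrow> 'v" where
  "first_step \<iota> = path_from \<iota> ! 1"

lemma path_from_length:
  assumes "(e, h) \<in> half_edges"
  shows "2 \<le> length (path_from (e, h))" "length (path_from (e, h)) \<le> 4"
  using assms path_length unfolding path_from_def by auto

lemma distinct_path_from: "(e, h) \<in> half_edges \<Longrightarrow> distinct (path_from (e, h))"
  using path_distinct unfolding path_from_def by auto

lemma inner_path_from: "inner (path_from (e, h)) = inner (P e)"
  unfolding path_from_def by simp

lemma path_from_edge:
  assumes "(e, h) \<in> half_edges" "Suc k < length (path_from (e, h))"
  shows "{path_from (e, h) ! k, path_from (e, h) ! Suc k} \<in> E"
proof -
  have "e \<in> EH" using assms(1) by simp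
  then show ?thesis
    using assms(2) path_edge rev_path_edge[OF path_edge] unfolding path_from_def
    by (simp split: if_splits)
qed

lemma path_from_ends:
  assumes "(e, h) \<in> half_edges"
  shows "hd (path_from (e, h)) = \<phi> h"
    and "\<exists>h'\<in>VH. h' \<noteq> h \<and> e = {h, h'} \<and> last (path_from (e, h)) = \<phi> h'"
proof -
  have e: "e \<in> EH" "h \<in> e" using assms by auto
  obtain h' where h': "h' \<in> VH" "h' \<noteq> h" "e = {h, h'}" using half_edge_other_end[OF assms] .
  have "h \<in> VH" using half_edge_vertex[OF assms] .
  then have ne: "\<phi> h \<noteq> \<phi> h'" using inj_onD[OF inj_branch _ _ h'(1)] h'(2) by blast
  have ends: "{\<phi> h, \<phi> h'} = {hd (P e), last (P e)}" using path_ends[OF e(1)] h'(3) by simp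
  have "P e \<noteq> []" using path_length[OF e(1)] by auto
  have "hd (path_from (e, h)) = \<phi> h \<and> last (path_from (e, h)) = \<phi> h'"
  proof (cases "hd (P e) = \<phi> h")
    case True
    then have "last (P e) = \<phi> h'" using ends ne by (auto simp: doubleton_eq_iff)
    then show ?thesis using True unfolding path_from_def by simp
  next
    case False
    then have "last (P e) = \<phi> h" "hd (P e) = \<phi> h'" using ends by (auto simp: doubleton_eq_iff)
    then show ?thesis using False \<open>P e \<noteq> []\<close> unfolding path_from_def by (simp add: hd_rev last_rev)
  qed
  then show "hd (path_from (e, h)) = \<phi> h"
    and "\<exists>h'\<in>VH. h' \<noteq> h \<and> e = {h, h'} \<and> last (path_from (e, h)) = \<phi> h'"
    using h' by auto
qed

lemma path_from_nth_0: "(e, h) \<in> half_edges \<Longrightarrow> path_from (e, h) ! 0 = \<phi> h"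
proof -
  assume a: "(e, h) \<in> half_edges"
  then have "path_from (e, h) \<noteq> []" using path_from_length(1)[OF a] by auto
  then show ?thesis using path_from_ends(1)[OF a] by (simp add: hd_conv_nth)
qed

lemma last_path_from_branch: "(e, h) \<in> half_edges \<Longrightarrow> last (path_from (e, h)) \<in> branch"
  using path_from_ends(2) by blast

lemma last_path_from_inj:
  assumes "(e, h) \<in> half_edges" "(e', h) \<in> half_edges"
    and "last (path_from (e, h)) = last (path_from (e', h))"
  shows "e = e'"
proof -
  obtain h2 where h2: "h2 \<in> VH" "e = {h, h2}" "last (path_from (e, h)) = \<phi> h2"
    using path_from_ends(2)[OF assms(1)] by blast
  obtain h3 where h3: "h3 \<in> VH" "e' = {h, h3}" "last (path_from (e', h)) = \<phi> h3"
    using path_from_ends(2)[OF assms(2)] by blast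
  have "h2 = h3" using inj_onD[OF inj_branch _ h2(1) h3(1)] h2(3) h3(3) assms(3) by simp
  then show ?thesis using h2(2) h3(2) by simp
qed

lemma path_from_inner:
  assumes "(e, h) \<in> half_edges" "0 < k" "Suc k < length (path_from (e, h))"
  shows "path_from (e, h) ! k \<in> inner (P e) - branch"
  using nth_mem_inner[OF assms(2,3)] path_inner assms(1) by (auto simp: inner_path_from)

lemma path_from_continues:
  assumes "(e, h) \<in> half_edges" "0 < k" "k < length (path_from (e, h))"
    and "path_from (e, h) ! k \<notin> branch"
  shows "Suc k < length (path_from (e, h))"
proof (rule ccontr)
  assume big: "\<not> ?thesis"
  then have "k = length (path_from (e, h)) - 1" using assms(3) by simp
  moreover have "path_from (e, h) \<noteq> []" using assms(3) by auto
  ultimately have "path_from (e, h) ! k = last (path_from (e, h))"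
    by (simp add: last_conv_nth)
  then show False using assms(4) last_path_from_branch[OF assms(1)] by simp
qed

lemma path_from_nth_neq:
  assumes "(e, h) \<in> half_edges" "k < i" "i < length (path_from (e, h))"
  shows "path_from (e, h) ! i \<noteq> path_from (e, h) ! k"
  using distinct_path_from[OF assms(1)] assms(2,3) by (simp add: nth_eq_iff_index_eq)

lemma last_path_from_conv_nth:
  "(e, h) \<in> half_edges \<Longrightarrow>
     last (path_from (e, h)) = path_from (e, h) ! (length (path_from (e, h)) - 1)"
  using path_from_length(1) by (metis last_conv_nth list.size(3) not_numeral_le_zero)

lemma first_step_edge: "(e, h) \<in> half_edges \<Longrightarrow> {\<phi> h, first_step (e, h)} \<in> E"
  using path_from_edge[of e h 0] path_from_length[of e h] path_from_nth_0[of e h]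
  unfolding first_step_def by simp

lemma first_step_inj:
  assumes "(e, h) \<in> half_edges" "(e', h) \<in> half_edges"
    and "first_step (e, h) = first_step (e', h)"
  shows "e = e'"
proof (cases "first_step (e, h) \<in> branch")
  case True
  have "last (path_from (x, h)) = first_step (x, h)"
    if "(x, h) \<in> half_edges" "first_step (x, h) \<in> branch" for x
  proof -
    have "\<not> Suc 1 < length (path_from (x, h))"
      using path_from_inner[OF that(1), of 1] that(2) unfolding first_step_def by auto
    then have "length (path_from (x, h)) = 2" using path_from_length[OF that(1)] by simp
    moreover from this have "path_from (x, h) \<noteq> []" by auto
    ultimately show ?thesis unfolding first_step_def by (simp add: last_conv_nth)
  qed
  from this[OF assms(1) True] this[OF assms(2)]
  have "last (path_from (e, h)) = last (path_from (e', h))" using True assms(3) by simp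
  then show ?thesis using last_path_from_inj[OF assms(1,2)] by simp
next
  case False
  have "first_step (x, h) \<in> inner (P x)"
    if "(x, h) \<in> half_edges" "first_step (x, h) \<notin> branch" for x
    using path_from_continues[OF that(1), of 1] path_from_length[OF that(1)]
      path_from_inner[OF that(1), of 1] that(2)
    unfolding first_step_def by fastforce
  from this[OF assms(1) False] this[OF assms(2)]
  have "first_step (e, h) \<in> inner (P e) \<inter> inner (P e')" using False assms(3) by simp
  then show ?thesis using inner_disjoint[of e e'] assms(1,2) by auto
qed

definition half_edges_at :: "'v \<Rightarrow> ('h set \<times> 'h) set" where
  "half_edges_at x = {\<iota> \<in> half_edges. \<phi> (snd \<iota>) = x}"

definition branch_degree :: "'v \<Rightarrow> nat" where
  "branch_degree x = card (half_edges_at x)"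

lemma card_half_edges_eq_sum_branch_degree: "card half_edges = (\<Sum>x\<in>branch. branch_degree x)"
  unfolding branch_degree_def half_edges_at_def
  by (rule card_eq_sum_card_fibres) (auto simp: finite_half_edges finite_VH half_edge_vertex)

lemma inj_on_half_edges_atI:
  assumes "\<And>e e' h. (e, h) \<in> half_edges \<Longrightarrow> (e', h) \<in> half_edges \<Longrightarrow>
      f (e, h) = f (e', h) \<Longrightarrow> e = e'"
  shows "inj_on f (half_edges_at x)"
proof (rule inj_onI)
  fix \<iota> \<kappa> assume at: "\<iota> \<in> half_edges_at x" "\<kappa> \<in> half_edges_at x" and eq: "f \<iota> = f \<kappa>"
  obtain e h e' h' where \<iota>\<kappa>: "\<iota> = (e, h)" "\<kappa> = (e', h')" by fastforce
  have "(e, h) \<in> half_edges" "(e', h') \<in> half_edges" "\<phi> h = \<phi> h'"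
    using at \<iota>\<kappa> unfolding half_edges_at_def by auto
  moreover from this have "h = h'" using inj_onD[OF inj_branch] half_edge_vertex by simp
  ultimately show "\<iota> = \<kappa>" using assms eq \<iota>\<kappa> by simp
qed

lemma first_step_inj_on_half_edges_at: "inj_on first_step (half_edges_at x)"
  using first_step_inj by (rule inj_on_half_edges_atI)

lemma last_path_from_inj_on_half_edges_at: "inj_on (\<lambda>\<iota>. last (path_from \<iota>)) (half_edges_at x)"
  using last_path_from_inj by (rule inj_on_half_edges_atI)

lemma first_step_image: "first_step ` half_edges_at x \<subseteq> {y. {x, y} \<in> E}"
  unfolding half_edges_at_def using first_step_edge by auto

lemma branch_degree_le:
  assumes "finite N" "{y. {x, y} \<in> E} \<subseteq> N"
  shows "branch_degree x \<le> card N"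
  unfolding branch_degree_def
  using card_inj_on_le[OF first_step_inj_on_half_edges_at] first_step_image assms by blast

lemma branch_degree_eq_imp_first_step:
  assumes "finite N" "{y. {x, y} \<in> E} \<subseteq> N" "branch_degree x = card N" "y \<in> N"
  shows "\<exists>\<iota>\<in>half_edges_at x. first_step \<iota> = y"
proof -
  have "card (first_step ` half_edges_at x) = card N"
    using assms(3) first_step_inj_on_half_edges_at unfolding branch_degree_def
    by (simp add: card_image)
  then have "first_step ` half_edges_at x = N"
    using card_seteq[OF assms(1), of "first_step ` half_edges_at x"] first_step_image assms(2)
    by auto
  then show ?thesis using assms(4) by blast
qed

end

lemma G_vertsE:
  assumes "x \<in> G_verts m p cl"
  obtains "x = Apex"
    | j t where "x = Cyc j t" "j < p" "t < deg m cl j"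
    | j t s where "x = SubC j t s" "j < p" "t < deg m cl j" "s < 2"
    | j t s where "x = SubA j t s" "j < p" "t < deg m cl j" "s < 2"
    | i j where "x = Tri i j" "i < m" "j \<in> cl i"
  using assms unfolding G_verts_def by blast

lemma G_nbrs_SubC0: "{y. {SubC j t 0, y} \<in> G_edges m p cl ord} \<subseteq> {Cyc j t, SubC j t 1}"
  unfolding G_edges_def by (auto simp: doubleton_eq_iff)

lemma G_nbrs_SubC1:
  "{y. {SubC j t 1, y} \<in> G_edges m p cl ord} \<subseteq> {SubC j t 0, Cyc j ((t + 1) mod deg m cl j)}"
  unfolding G_edges_def by (auto simp: doubleton_eq_iff)

lemma G_nbrs_SubA0: "{y. {SubA j t 0, y} \<in> G_edges m p cl ord} \<subseteq> {Apex, SubA j t 1}"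
  unfolding G_edges_def by (auto simp: doubleton_eq_iff)

lemma G_nbrs_SubA1: "{y. {SubA j t 1, y} \<in> G_edges m p cl ord} \<subseteq> {SubA j t 0, Cyc j t}"
  unfolding G_edges_def by (auto simp: doubleton_eq_iff)

lemma G_nbr_Apex:
  "{Apex, y} \<in> G_edges m p cl ord \<Longrightarrow> \<exists>j t. j < p \<and> t < deg m cl j \<and> y = SubA j t 0"
  unfolding G_edges_def by (auto simp: doubleton_eq_iff)

lemma G_nbr_Tri:
  "{Tri i j, y} \<in> G_edges m p cl ord \<Longrightarrow>
     (\<exists>k\<in>cl i. k \<noteq> j \<and> y = Tri i k) \<or> (\<exists>t<deg m cl j. ord j t = i \<and> y = Cyc j t)"
  unfolding G_edges_def by (auto simp: doubleton_eq_iff)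

definition cycle_nbrs ::
  "nat \<Rightarrow> (nat \<Rightarrow> nat set) \<Rightarrow> (nat \<Rightarrow> nat \<Rightarrow> nat) \<Rightarrow> nat \<Rightarrow> nat \<Rightarrow> gvert set" where
  "cycle_nbrs m cl ord j t =
     {SubC j t 0, SubA j t 1, Tri (ord j t) j, SubC j (if t = 0 then deg m cl j - 1 else t - 1) 1}"

lemma G_nbrs_Cyc: "{y. {Cyc j t, y} \<in> G_edges m p cl ord} \<subseteq> cycle_nbrs m cl ord j t"
proof
  fix y assume "y \<in> {y. {Cyc j t, y} \<in> G_edges m p cl ord}"
  then have "y \<in> {SubC j t 0, SubA j t 1, Tri (ord j t) j} \<or>
      (\<exists>t'<deg m cl j. (t' + 1) mod deg m cl j = t \<and> y = SubC j t' 1)"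
    unfolding G_edges_def by (auto simp: doubleton_eq_iff)
  moreover have "t' = (if t = 0 then deg m cl j - 1 else t - 1)"
    if "t' < deg m cl j" "(t' + 1) mod deg m cl j = t" for t'
  proof (cases "t' + 1 < deg m cl j")
    case False
    then have "t' + 1 = deg m cl j" using that(1) by simp
    then show ?thesis using that(2) by auto
  qed (use that in auto)
  ultimately show "y \<in> cycle_nbrs m cl ord j t" unfolding cycle_nbrs_def by auto
qed

lemma card_cycle_nbrs: "card (cycle_nbrs m cl ord j t) \<le> 4"
  unfolding cycle_nbrs_def by (simp add: card_insert_if)

lemma card_doubleton_le: "card {a, b} \<le> 2"
  by (cases "a = b") auto

fun is_Cyc :: "gvert \<Rightarrow> bool" where
  "is_Cyc (Cyc j t) = True"
| "is_Cyc _ = False"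

fun var_of :: "gvert \<Rightarrow> nat" where
  "var_of Apex = 0"
| "var_of (Cyc j t) = j"
| "var_of (SubC j t s) = j"
| "var_of (SubA j t s) = j"
| "var_of (Tri i j) = j"

locale positive_3cnf =
  fixes m p :: nat and cl :: "nat \<Rightarrow> nat set" and ord :: "nat \<Rightarrow> nat \<Rightarrow> nat"
  assumes clause_vars: "i < m \<Longrightarrow> cl i \<subseteq> {..<p}"
    and card_clause: "i < m \<Longrightarrow> card (cl i) = 3"
    and occurrences: "j < p \<Longrightarrow> 3 \<le> deg m cl j"
    and cycle_order: "j < p \<Longrightarrow> bij_betw (ord j) {..<deg m cl j} {i. i < m \<and> j \<in> cl i}"
begin

lemma finite_clause: "i < m \<Longrightarrow> finite (cl i)"
  using card_clause by (metis card.infinite zero_neq_numeral)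

lemma var_less: "i < m \<Longrightarrow> j \<in> cl i \<Longrightarrow> j < p"
  using clause_vars by blast

lemma ord_clause: "j < p \<Longrightarrow> t < deg m cl j \<Longrightarrow> ord j t < m \<and> j \<in> cl (ord j t)"
  using bij_betw_apply[OF cycle_order] by fastforce

lemma ord_inj: "j < p \<Longrightarrow> t < deg m cl j \<Longrightarrow> t' < deg m cl j \<Longrightarrow> ord j t = ord j t' \<Longrightarrow> t = t'"
  using bij_betw_imp_inj_on[OF cycle_order] by (auto dest: inj_onD)

lemma ord_surj: "i < m \<Longrightarrow> j \<in> cl i \<Longrightarrow> \<exists>t<deg m cl j. ord j t = i"
  using bij_betw_imp_surj_on[OF cycle_order[OF var_less]]
  by (metis (no_types, lifting) imageE lessThan_iff mem_Collect_eq)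

lemma three_le_clauses: "0 < m \<Longrightarrow> 3 \<le> m"
proof -
  assume "0 < m"
  then have "cl 0 \<subseteq> {..<p}" "card (cl 0) = 3" using clause_vars card_clause by auto
  then have "0 < p" using card_mono[of "{..<p}" "cl 0"] by fastforce
  then have "3 \<le> deg m cl 0" using occurrences by simp
  moreover have "deg m cl 0 \<le> m"
    unfolding deg_def using card_mono[of "{..<m}" "{i. i < m \<and> 0 \<in> cl i}"] by fastforce
  ultimately show ?thesis by simp
qed

fun clause_of :: "gvert \<Rightarrow> nat" where
  "clause_of Apex = 0"
| "clause_of (Cyc j t) = ord j t"
| "clause_of (SubC j t s) = ord j t"
| "clause_of (SubA j t s) = ord j t"
| "clause_of (Tri i j) = i"

lemma clause_of_less: "x \<in> G_verts m p cl \<Longrightarrow> x \<noteq> Apex \<Longrightarrow> clause_of x < m"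
  by (erule G_vertsE) (auto simp: ord_clause)

lemma G_nbrs_Tri_card:
  assumes "i < m" "j \<in> cl i"
  obtains N where "finite N" "{y. {Tri i j, y} \<in> G_edges m p cl ord} \<subseteq> N" "card N \<le> 3"
proof -
  obtain t0 where t0: "t0 < deg m cl j" "ord j t0 = i" using ord_surj assms by blast
  let ?N = "insert (Cyc j t0) (Tri i ` (cl i - {j}))"
  have sub: "{y. {Tri i j, y} \<in> G_edges m p cl ord} \<subseteq> ?N"
  proof
    fix y assume "y \<in> {y. {Tri i j, y} \<in> G_edges m p cl ord}"
    then have "(\<exists>k\<in>cl i. k \<noteq> j \<and> y = Tri i k) \<or> (\<exists>t<deg m cl j. ord j t = i \<and> y = Cyc j t)"
      using G_nbr_Tri by simp
    then show "y \<in> ?N" using ord_inj[OF var_less[OF assms] _ t0(1)] t0(2) by auto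
  qed
  have card: "card ?N \<le> 3"
  proof -
    have "card (Tri i ` (cl i - {j})) \<le> card (cl i - {j})"
      by (rule card_image_le) (simp add: finite_clause assms(1))
    also have "\<dots> = 2" using card_clause[OF assms(1)] finite_clause[OF assms(1)] assms(2) by simp
    finally show ?thesis by (intro card_insert_le_m1) simp_all
  qed
  have "finite ?N" using finite_clause[OF assms(1)] by simp
  then show thesis using that sub card by blast
qed

lemma G_degree_bound:
  assumes "x \<in> G_verts m p cl" "x \<noteq> Apex"
  obtains N where "finite N" "{y. {x, y} \<in> G_edges m p cl ord} \<subseteq> N"
    "card N \<le> (if is_Cyc x then 4 else 3)"
  using assms(1)
proof (cases rule: G_vertsE)
  case (2 j t)
  have "{y. {x, y} \<in> G_edges m p cl ord} \<subseteq> cycle_nbrs m cl ord j t"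
    using G_nbrs_Cyc 2(1) by simp
  moreover have "finite (cycle_nbrs m cl ord j t)" by (simp add: cycle_nbrs_def)
  ultimately show thesis using that card_cycle_nbrs 2(1) by simp
next
  case (3 j t s)
  then consider "s = 0" | "s = 1" by linarith
  then show thesis
  proof cases
    case 1
    then show thesis
      using that[of "{Cyc j t, SubC j t 1}"] G_nbrs_SubC0[of j t m p cl ord] 3 card_doubleton_le
      by simp
  next
    case 2
    then show thesis
      using that[of "{SubC j t 0, Cyc j ((t + 1) mod deg m cl j)}"] G_nbrs_SubC1[of j t m p cl ord]
        3 card_doubleton_le by simp
  qed
next
  case (4 j t s)
  then consider "s = 0" | "s = 1" by linarith
  then show thesis
  proof cases
    case 1
    then show thesis
      using that[of "{Apex, SubA j t 1}"] G_nbrs_SubA0[of j t m p cl ord] 4 card_doubleton_le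
      by simp
  next
    case 2
    then show thesis
      using that[of "{SubA j t 0, Cyc j t}"] G_nbrs_SubA1[of j t m p cl ord] 4 card_doubleton_le
      by simp
  qed
next
  case (5 i j)
  then show thesis using G_nbrs_Tri_card[OF 5(2,3)] that by auto
qed (use assms in simp)

end

lemma card3_not_paired_off:
  assumes "card X = 3"
    and paired: "\<And>x. x \<in> X \<Longrightarrow> \<exists>a\<in>A. x \<in> S a \<and> (\<exists>y\<in>X. y \<noteq> x \<and> y \<in> S a)"
    and small: "\<And>a. a \<in> A \<Longrightarrow> finite (S a) \<and> card (S a) \<le> 2"
    and disjoint: "\<And>a b. a \<in> A \<Longrightarrow> b \<in> A \<Longrightarrow> a \<noteq> b \<Longrightarrow> S a \<inter> S b = {}"
  shows False
proof -
  obtain x y z where X: "X = {x, y, z}" "x \<noteq> y" "x \<noteq> z" "y \<noteq> z"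
    using assms(1) card_3_iff by metis
  obtain a where a: "a \<in> A" "x \<in> S a" and partner: "\<exists>w\<in>X. w \<noteq> x \<and> w \<in> S a"
    using paired X(1) by blast
  obtain b where b: "b \<in> A" "z \<in> S b" and partner': "\<exists>w\<in>X. w \<noteq> z \<and> w \<in> S b"
    using paired X(1) by blast
  show False
  proof (cases "y \<in> S a")
    case True
    then have "a = b" using partner' disjoint[OF a(1) b(1)] a(2) X(1) by auto
    then have "{x, y, z} \<subseteq> S a" using a True b by auto
    then have "3 \<le> card (S a)" using card_mono[of "S a" "{x, y, z}"] small[OF a(1)] X by simp
    then show False using small[OF a(1)] by simp
  next
    case False
    then have "z \<in> S a" using partner X(1) by auto
    then have "{x, z} \<subseteq> S a" using a by auto
    obtain c where c: "c \<in> A" "y \<in> S c" and partner'': "\<exists>w\<in>X. w \<noteq> y \<and> w \<in> S c"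
      using paired X(1) by blast
    have "c = a" using partner'' disjoint[OF c(1) a(1)] a(2) \<open>z \<in> S a\<close> X(1) by auto
    then show False using c(2) False by simp
  qed
qed

lemma clause_count_arith:
  fixes m n a s f :: nat
  assumes m: "3 \<le> m" and f: "f \<le> a + s" and a: "a \<le> n" "a \<le> 3" and s: "s \<le> 4 * n"
    and full: "s = 4 * n \<Longrightarrow> n \<le> 2"
  shows "(2 * m + 1) * f \<le> 10 + 10 * m * n \<and>
    ((2 * m + 1) * f = 10 + 10 * m * n \<longrightarrow> n = 2 \<and> s = 4 * n)"
proof (cases "s = 4 * n")
  case True
  then have "n \<le> 2" "f \<le> 5 * n" using f a full by auto
  then have "(2 * m + 1) * f \<le> 10 * m * n + 5 * n"
    using mult_le_mono2[of f "5 * n" "2 * m + 1"] by (simp add: algebra_simps)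
  then show ?thesis using \<open>n \<le> 2\<close> True by auto
next
  case False
  show ?thesis
  proof (cases "n \<le> 2")
    case True
    have "f + 1 \<le> 5 * n" using f a s False by linarith
    then have "(2 * m + 1) * (f + 1) \<le> (2 * m + 1) * (5 * n)" by (rule mult_le_mono2)
    then have "(2 * m + 1) * f + (2 * m + 1) \<le> 10 * m * n + 5 * n" by (simp add: algebra_simps)
    then show ?thesis using True by linarith
  next
    case False
    have "f \<le> 4 * n + 2" using f a s \<open>s \<noteq> 4 * n\<close> by linarith
    then have "(2 * m + 1) * f \<le> (2 * m + 1) * (4 * n + 2)" by (rule mult_le_mono2)
    moreover obtain k l where "m = 3 + k" "n = 3 + l"
      using le_Suc_ex[OF m] le_Suc_ex[of 3 n] False by auto
    then have "(2 * m + 1) * (4 * n + 2) < 10 + 10 * m * n" by (simp add: algebra_simps)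
    ultimately show ?thesis by linarith
  qed
qed

locale reduction_embedding =
  positive_3cnf m p cl ord +
  shallow_embedding VH EH "G_verts m p cl" "G_edges m p cl ord" \<phi> P
  for m p cl ord and VH :: "'h set" and EH \<phi> P
begin

lemma branch_degree_bound:
  assumes "x \<in> branch" "x \<noteq> Apex"
  shows "branch_degree x \<le> (if is_Cyc x then 4 else 3)"
proof -
  have "x \<in> G_verts m p cl" using assms(1) branch_subset by blast
  then obtain N where "finite N" "{y. {x, y} \<in> G_edges m p cl ord} \<subseteq> N"
    "card N \<le> (if is_Cyc x then 4 else 3)"
    using G_degree_bound assms(2) by blast
  then show ?thesis using branch_degree_le by (meson le_trans)
qed

lemma branch_clause_less: "x \<in> branch \<Longrightarrow> x \<noteq> Apex \<Longrightarrow> clause_of x < m"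
  using clause_of_less branch_subset by blast

lemma apex_half_edge:
  assumes "(e, h) \<in> half_edges" "\<phi> h = Apex"
  obtains j t where "j < p" "t < deg m cl j" "first_step (e, h) = SubA j t 0"
    "last (path_from (e, h)) \<in> {SubA j t 0, SubA j t 1, Cyc j t}"
proof -
  let ?xs = "path_from (e, h)"
  have len: "2 \<le> length ?xs" "length ?xs \<le> 4" using path_from_length[OF assms(1)] by auto
  have "{Apex, ?xs ! 1} \<in> G_edges m p cl ord"
    using first_step_edge[OF assms(1)] assms(2) unfolding first_step_def by simp
  then obtain j t where jt: "j < p" "t < deg m cl j" "?xs ! 1 = SubA j t 0"
    using G_nbr_Apex by blast
  have "last ?xs \<in> {SubA j t 0, SubA j t 1, Cyc j t}"
  proof (cases "length ?xs = 2")
    case True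
    then show ?thesis using last_path_from_conv_nth[OF assms(1)] jt(3) by simp
  next
    case False
    have "{?xs ! 1, ?xs ! 2} \<in> G_edges m p cl ord"
      using path_from_edge[OF assms(1), of 1] len False by (simp add: numeral_2_eq_2)
    then have "?xs ! 2 \<in> {Apex, SubA j t 1}" using G_nbrs_SubA0[of j t m p cl ord] jt(3) by auto
    moreover have "2 < length ?xs" using len False by linarith
    then have "?xs ! 2 \<noteq> ?xs ! 0" using path_from_nth_neq[OF assms(1), of 0 2] by simp
    ultimately have x2: "?xs ! 2 = SubA j t 1"
      using path_from_nth_0[OF assms(1)] assms(2) by auto
    show ?thesis
    proof (cases "length ?xs = 3")
      case True
      then show ?thesis using last_path_from_conv_nth[OF assms(1)] x2 by simp
    next
      case False
      then have len4: "length ?xs = 4" using len \<open>length ?xs \<noteq> 2\<close> by simp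
      then have "{?xs ! 2, ?xs ! 3} \<in> G_edges m p cl ord"
        using path_from_edge[OF assms(1), of 2] by (simp add: numeral_3_eq_3)
      then have "?xs ! 3 \<in> {SubA j t 0, Cyc j t}" using G_nbrs_SubA1[of j t m p cl ord] x2 by auto
      moreover have "?xs ! 3 \<noteq> ?xs ! 1" using path_from_nth_neq[OF assms(1), of 1 3] len4 by simp
      ultimately show ?thesis using last_path_from_conv_nth[OF assms(1)] len4 jt(3) by simp
    qed
  qed
  then show thesis using that jt unfolding first_step_def by blast
qed

lemma Cyc_branch_bounds: "Cyc j t \<in> branch \<Longrightarrow> j < p \<and> t < deg m cl j"
  using branch_subset unfolding G_verts_def by blast

lemma saturated_cycle_first_step:
  assumes "Cyc j t \<in> branch" "branch_degree (Cyc j t) = 4" "y \<in> cycle_nbrs m cl ord j t"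
  obtains e h where "(e, h) \<in> half_edges" "\<phi> h = Cyc j t" "first_step (e, h) = y"
proof -
  have fin: "finite (cycle_nbrs m cl ord j t)" by (simp add: cycle_nbrs_def)
  have "4 \<le> card (cycle_nbrs m cl ord j t)"
    using branch_degree_le[OF fin G_nbrs_Cyc] assms(2) by simp
  then have "branch_degree (Cyc j t) = card (cycle_nbrs m cl ord j t)"
    using card_cycle_nbrs assms(2) by (simp add: le_antisym)
  then obtain \<iota> where "\<iota> \<in> half_edges_at (Cyc j t)" "first_step \<iota> = y"
    using branch_degree_eq_imp_first_step[OF fin G_nbrs_Cyc _ assms(3)] by blast
  then show thesis using that unfolding half_edges_at_def by (cases \<iota>) auto
qed

text \<open>Saturation yields a path leaving \<open>Cyc j t\<close> through \<open>SubC j t 0\<close>; it cannot stop at a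
  subdivision vertex, so it ends at the next cycle vertex.\<close>

lemma saturated_cycle_successor:
  assumes "Cyc j t \<in> branch" "branch_degree (Cyc j t) = 4"
    and "SubC j t 0 \<notin> branch" "SubC j t 1 \<notin> branch"
  shows "Cyc j ((t + 1) mod deg m cl j) \<in> branch"
proof -
  obtain e h where eh: "(e, h) \<in> half_edges" "\<phi> h = Cyc j t" "first_step (e, h) = SubC j t 0"
    using saturated_cycle_first_step[OF assms(1,2)] unfolding cycle_nbrs_def by blast
  let ?xs = "path_from (e, h)"
  have x0: "?xs ! 0 = Cyc j t" using path_from_nth_0[OF eh(1)] eh(2) by simp
  have x1: "?xs ! 1 = SubC j t 0" using eh(3) unfolding first_step_def .
  have len2: "2 < length ?xs"
    using path_from_continues[OF eh(1), of 1] path_from_length[OF eh(1)] x1 assms(3) by simp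
  then have "{?xs ! 1, ?xs ! 2} \<in> G_edges m p cl ord"
    using path_from_edge[OF eh(1), of 1] by (simp add: numeral_2_eq_2)
  then have "?xs ! 2 \<in> {Cyc j t, SubC j t 1}" using G_nbrs_SubC0[of j t m p cl ord] x1 by auto
  moreover have "?xs ! 2 \<noteq> ?xs ! 0" using path_from_nth_neq[OF eh(1), of 0 2] len2 by simp
  ultimately have x2: "?xs ! 2 = SubC j t 1" using x0 by auto
  have len4: "length ?xs = 4"
    using path_from_continues[OF eh(1), of 2] path_from_length[OF eh(1)] len2 x2 assms(4) by simp
  then have "{?xs ! 2, ?xs ! 3} \<in> G_edges m p cl ord"
    using path_from_edge[OF eh(1), of 2] by (simp add: numeral_3_eq_3)
  then have "?xs ! 3 \<in> {SubC j t 0, Cyc j ((t + 1) mod deg m cl j)}"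
    using G_nbrs_SubC1[of j t m p cl ord] x2 by auto
  moreover have "?xs ! 3 \<noteq> ?xs ! 1" using path_from_nth_neq[OF eh(1), of 1 3] len4 by simp
  ultimately have "?xs ! 3 = Cyc j ((t + 1) mod deg m cl j)" using x1 by auto
  then show ?thesis
    using last_path_from_branch[OF eh(1)] last_path_from_conv_nth[OF eh(1)] len4 by simp
qed

lemma saturated_cycle_triangle_path:
  assumes "Cyc j t \<in> branch" "branch_degree (Cyc j t) = 4" "ord j t = i"
    and no_tri: "\<forall>k\<in>cl i. Tri i k \<notin> branch"
  shows "\<exists>e\<in>EH. Tri i j \<in> inner (P e) \<and> (\<exists>k\<in>cl i. k \<noteq> j \<and> Tri i k \<in> inner (P e))"
proof -
  have jt: "j < p" "t < deg m cl j" using Cyc_branch_bounds[OF assms(1)] by auto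
  then have j: "j \<in> cl i" using ord_clause assms(3) by blast
  obtain e h where eh: "(e, h) \<in> half_edges" "\<phi> h = Cyc j t" "first_step (e, h) = Tri i j"
    using saturated_cycle_first_step[OF assms(1,2)] assms(3) unfolding cycle_nbrs_def by blast
  let ?xs = "path_from (e, h)"
  have x0: "?xs ! 0 = Cyc j t" using path_from_nth_0[OF eh(1)] eh(2) by simp
  have x1: "?xs ! 1 = Tri i j" using eh(3) unfolding first_step_def .
  have len2: "2 < length ?xs"
    using path_from_continues[OF eh(1), of 1] path_from_length[OF eh(1)] x1 no_tri j by simp
  then have inner1: "Tri i j \<in> inner (P e)"
    using path_from_inner[OF eh(1), of 1] x1 by simp
  have "{?xs ! 1, ?xs ! 2} \<in> G_edges m p cl ord"
    using path_from_edge[OF eh(1), of 1] len2 by (simp add: numeral_2_eq_2)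
  then have "(\<exists>k\<in>cl i. k \<noteq> j \<and> ?xs ! 2 = Tri i k) \<or>
      (\<exists>t'<deg m cl j. ord j t' = i \<and> ?xs ! 2 = Cyc j t')"
    using G_nbr_Tri x1 by simp
  moreover have "?xs ! 2 \<noteq> Cyc j t" using path_from_nth_neq[OF eh(1), of 0 2] len2 x0 by simp
  then have "\<not> (\<exists>t'<deg m cl j. ord j t' = i \<and> ?xs ! 2 = Cyc j t')"
    using ord_inj[OF jt(1) _ jt(2)] assms(3) by auto
  ultimately obtain k where k: "k \<in> cl i" "k \<noteq> j" "?xs ! 2 = Tri i k" by blast
  have "3 < length ?xs"
    using path_from_continues[OF eh(1), of 2] len2 k no_tri by (simp add: numeral_3_eq_3)
  then have "Tri i k \<in> inner (P e)" using path_from_inner[OF eh(1), of 2] k(3) by simp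
  then show ?thesis using inner1 k eh(1) by auto
qed

lemma no_saturated_clause:
  assumes "i < m" and no_tri: "\<forall>k\<in>cl i. Tri i k \<notin> branch"
    and saturated: "\<forall>j\<in>cl i. \<exists>t. ord j t = i \<and> Cyc j t \<in> branch \<and> branch_degree (Cyc j t) = 4"
  shows False
proof (rule card3_not_paired_off)
  show "card (Tri i ` cl i) = 3" using card_clause[OF assms(1)] by (simp add: card_image inj_on_def)
  show "\<exists>e\<in>EH. x \<in> inner (P e) \<and> (\<exists>y\<in>Tri i ` cl i. y \<noteq> x \<and> y \<in> inner (P e))"
    if x: "x \<in> Tri i ` cl i" for x
  proof -
    obtain j where j: "j \<in> cl i" "x = Tri i j" using x by blast
    then obtain t where "ord j t = i" "Cyc j t \<in> branch" "branch_degree (Cyc j t) = 4"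
      using saturated by blast
    then show ?thesis using saturated_cycle_triangle_path[OF _ _ _ no_tri] j by blast
  qed
  show "finite (inner (P e)) \<and> card (inner (P e)) \<le> 2" if "e \<in> EH" for e
    using card_inner_le[of "P e"] path_length[OF that] unfolding inner_def by auto
  show "inner (P e) \<inter> inner (P e') = {}" if "e \<in> EH" "e' \<in> EH" "e \<noteq> e'" for e e'
    using inner_disjoint that by blast
qed

definition half_edge_clause :: "'h set \<times> 'h \<Rightarrow> nat" where
  "half_edge_clause \<iota> = clause_of (if \<phi> (snd \<iota>) = Apex then first_step \<iota> else \<phi> (snd \<iota>))"

definition clause_half_edges :: "nat \<Rightarrow> ('h set \<times> 'h) set" where
  "clause_half_edges i = {\<iota> \<in> half_edges. half_edge_clause \<iota> = i}"

definition clause_branch :: "nat \<Rightarrow> gvert set" where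
  "clause_branch i = {x \<in> branch. x \<noteq> Apex \<and> clause_of x = i}"

definition apex_half_edges :: "nat \<Rightarrow> ('h set \<times> 'h) set" where
  "apex_half_edges i = {\<iota> \<in> half_edges_at Apex. clause_of (first_step \<iota>) = i}"

lemma finite_clause_branch: "finite (clause_branch i)"
  unfolding clause_branch_def using finite_VH by simp

lemma half_edge_clause_less: "\<iota> \<in> half_edges \<Longrightarrow> half_edge_clause \<iota> < m"
proof (cases \<iota>)
  case (Pair e h)
  assume \<iota>: "\<iota> \<in> half_edges"
  show ?thesis
  proof (cases "\<phi> h = Apex")
    case True
    then obtain j t where "j < p" "t < deg m cl j" "first_step (e, h) = SubA j t 0"
      using apex_half_edge \<iota> Pair by blast
    then show ?thesis using True Pair ord_clause unfolding half_edge_clause_def by simp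
  next
    case False
    then show ?thesis
      using branch_clause_less half_edge_vertex \<iota> Pair unfolding half_edge_clause_def by simp
  qed
qed

lemma card_half_edges_eq_sum_clauses: "card half_edges = (\<Sum>i<m. card (clause_half_edges i))"
  unfolding clause_half_edges_def
  by (rule card_eq_sum_card_fibres) (auto simp: finite_half_edges half_edge_clause_less)

lemma card_branch_eq_sum_clauses:
  assumes "Apex \<in> branch"
  shows "card branch = 1 + (\<Sum>i<m. card (clause_branch i))"
proof -
  have "clause_of ` (branch - {Apex}) \<subseteq> {..<m}" using branch_clause_less by blast
  then have "card (branch - {Apex}) = (\<Sum>i<m. card {x \<in> branch - {Apex}. clause_of x = i})"
    using card_eq_sum_card_fibres[of "branch - {Apex}" "{..<m}"] finite_VH by simp
  moreover have "{x \<in> branch - {Apex}. clause_of x = i} = clause_branch i" for i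
    unfolding clause_branch_def by auto
  moreover have "card branch = 1 + card (branch - {Apex})"
    using card_Suc_Diff1[OF _ assms] finite_VH by simp
  ultimately show ?thesis by simp
qed

lemma card_clause_half_edges_le:
  "card (clause_half_edges i) \<le> card (apex_half_edges i) + (\<Sum>x\<in>clause_branch i. branch_degree x)"
proof -
  have cover: "clause_half_edges i \<subseteq> apex_half_edges i \<union> (\<Union>x\<in>clause_branch i. half_edges_at x)"
  proof
    fix \<iota> assume \<iota>: "\<iota> \<in> clause_half_edges i"
    obtain e h where eh: "\<iota> = (e, h)" by fastforce
    have "(e, h) \<in> half_edges" "half_edge_clause (e, h) = i"
      using \<iota> eh unfolding clause_half_edges_def by auto
    moreover have "\<phi> h \<in> branch" using half_edge_vertex calculation(1) by simp
    ultimately have "\<iota> \<in> apex_half_edges i \<or> (\<phi> h \<in> clause_branch i \<and> \<iota> \<in> half_edges_at (\<phi> h))"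
      using eh
      unfolding apex_half_edges_def clause_branch_def half_edges_at_def half_edge_clause_def
      by (cases "\<phi> h = Apex") simp_all
    then show "\<iota> \<in> apex_half_edges i \<union> (\<Union>x\<in>clause_branch i. half_edges_at x)" by blast
  qed
  have sub: "apex_half_edges i \<union> (\<Union>x\<in>clause_branch i. half_edges_at x) \<subseteq> half_edges"
    unfolding apex_half_edges_def half_edges_at_def by auto
  have "card (clause_half_edges i) \<le>
      card (apex_half_edges i \<union> (\<Union>x\<in>clause_branch i. half_edges_at x))"
    using card_mono[OF finite_subset[OF sub finite_half_edges] cover] .
  also have "\<dots> \<le> card (apex_half_edges i) + card (\<Union>x\<in>clause_branch i. half_edges_at x)"
    by (rule card_Un_le)
  also have "card (\<Union>x\<in>clause_branch i. half_edges_at x) \<le> (\<Sum>x\<in>clause_branch i. branch_degree x)"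
    unfolding branch_degree_def by (rule card_UN_le[OF finite_clause_branch])
  finally show ?thesis by simp
qed

lemma card_apex_half_edges_le_clause_branch: "card (apex_half_edges i) \<le> card (clause_branch i)"
proof (rule card_inj_on_le[of "\<lambda>\<iota>. last (path_from \<iota>)"])
  show "inj_on (\<lambda>\<iota>. last (path_from \<iota>)) (apex_half_edges i)"
    using last_path_from_inj_on_half_edges_at unfolding apex_half_edges_def
    by (rule inj_on_subset) blast
  show "(\<lambda>\<iota>. last (path_from \<iota>)) ` apex_half_edges i \<subseteq> clause_branch i"
  proof clarify
    fix e h assume "(e, h) \<in> apex_half_edges i"
    then have eh: "(e, h) \<in> half_edges" "\<phi> h = Apex" "clause_of (first_step (e, h)) = i"
      unfolding apex_half_edges_def half_edges_at_def by auto
    then obtain j t where "first_step (e, h) = SubA j t 0"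
      "last (path_from (e, h)) \<in> {SubA j t 0, SubA j t 1, Cyc j t}"
      using apex_half_edge by blast
    then have "clause_of (last (path_from (e, h))) = i" "last (path_from (e, h)) \<noteq> Apex"
      using eh(3) by auto
    then show "last (path_from (e, h)) \<in> clause_branch i"
      using last_path_from_branch[OF eh(1)] unfolding clause_branch_def by simp
  qed
qed (rule finite_clause_branch)

lemma card_apex_half_edges_le_3:
  assumes "i < m"
  shows "card (apex_half_edges i) \<le> 3"
proof -
  have apex: "\<exists>j t. j < p \<and> t < deg m cl j \<and> first_step \<iota> = SubA j t 0 \<and> ord j t = i"
    if \<iota>: "\<iota> \<in> apex_half_edges i" for \<iota>
  proof -
    obtain e h where eh: "\<iota> = (e, h)" "(e, h) \<in> half_edges" "\<phi> h = Apex"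
      "clause_of (first_step (e, h)) = i"
      using \<iota> unfolding apex_half_edges_def half_edges_at_def by (cases \<iota>) auto
    then obtain j t where "j < p" "t < deg m cl j" "first_step (e, h) = SubA j t 0"
      using apex_half_edge by blast
    then show ?thesis using eh by auto
  qed
  have "card (apex_half_edges i) \<le> card (cl i)"
  proof (rule card_inj_on_le[of "\<lambda>\<iota>. var_of (first_step \<iota>)"])
    show "inj_on (\<lambda>\<iota>. var_of (first_step \<iota>)) (apex_half_edges i)"
    proof (rule inj_onI)
      fix \<iota> \<kappa> assume \<iota>\<kappa>: "\<iota> \<in> apex_half_edges i" "\<kappa> \<in> apex_half_edges i"
        and var: "var_of (first_step \<iota>) = var_of (first_step \<kappa>)"
      obtain j t where jt: "j < p" "t < deg m cl j" "first_step \<iota> = SubA j t 0" "ord j t = i"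
        using apex[OF \<iota>\<kappa>(1)] by blast
      obtain j' t' where jt': "t' < deg m cl j'" "first_step \<kappa> = SubA j' t' 0" "ord j' t' = i"
        using apex[OF \<iota>\<kappa>(2)] by blast
      have "j' = j" using var jt(3) jt'(2) by simp
      then have "t' = t" using ord_inj[OF jt(1) _ jt(2)] jt(4) jt' by simp
      then have "first_step \<iota> = first_step \<kappa>" using jt(3) jt'(2) \<open>j' = j\<close> by simp
      moreover have "\<iota> \<in> half_edges_at Apex" "\<kappa> \<in> half_edges_at Apex"
        using \<iota>\<kappa> unfolding apex_half_edges_def by auto
      ultimately show "\<iota> = \<kappa>" using inj_onD[OF first_step_inj_on_half_edges_at] by blast
    qed
    show "(\<lambda>\<iota>. var_of (first_step \<iota>)) ` apex_half_edges i \<subseteq> cl i"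
    proof clarify
      fix \<iota> assume "\<iota> \<in> apex_half_edges i"
      then obtain j t where "j < p" "t < deg m cl j" "first_step \<iota> = SubA j t 0" "ord j t = i"
        using apex by blast
      then show "var_of (first_step \<iota>) \<in> cl i" using ord_clause by auto
    qed
  qed (simp add: finite_clause assms)
  then show ?thesis using card_clause[OF assms] by simp
qed

definition saturated :: "gvert \<Rightarrow> bool" where
  "saturated x \<longleftrightarrow> is_Cyc x \<and> branch_degree x = 4"

lemma clause_branch_CycE:
  assumes "x \<in> clause_branch i" "is_Cyc x"
  obtains j t where "x = Cyc j t" "j < p" "t < deg m cl j" "ord j t = i" "j \<in> cl i"
proof -
  obtain j t where x: "x = Cyc j t" using assms(2) by (cases x) auto
  then have "Cyc j t \<in> branch" "ord j t = i" using assms(1) unfolding clause_branch_def by auto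
  then show thesis using that x Cyc_branch_bounds ord_clause by blast
qed

lemma var_of_inj_on_clause_branch:
  assumes "\<forall>x\<in>clause_branch i. is_Cyc x"
  shows "inj_on var_of (clause_branch i)"
proof (rule inj_onI)
  fix x y assume xy: "x \<in> clause_branch i" "y \<in> clause_branch i" "var_of x = var_of y"
  obtain j t where x: "x = Cyc j t" "j < p" "t < deg m cl j" "ord j t = i"
    using clause_branch_CycE[OF xy(1)] assms xy(1) by blast
  obtain j' t' where y: "y = Cyc j' t'" "t' < deg m cl j'" "ord j' t' = i"
    using clause_branch_CycE[OF xy(2)] assms xy(2) by blast
  have "j' = j" using xy(3) x(1) y(1) by simp
  then have "t' < deg m cl j" "ord j t = ord j t'" using x(4) y(2,3) by simp_all
  then have "t = t'" by (rule ord_inj[OF x(2,3)])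
  then show "x = y" using x(1) y(1) \<open>j' = j\<close> by simp
qed

text \<open>Three saturated cycle vertices in one clause would force the three triangle vertices of
  the clause onto pairwise disjoint paths, two per path.\<close>

lemma card_saturated_clause_branch:
  assumes i: "i < m" and sat: "\<forall>x\<in>clause_branch i. saturated x"
  shows "card (clause_branch i) \<le> 2"
proof (rule ccontr)
  assume big: "\<not> ?thesis"
  have cyc: "\<forall>x\<in>clause_branch i. is_Cyc x" using sat unfolding saturated_def by blast
  have sub: "var_of ` clause_branch i \<subseteq> cl i"
  proof clarify
    fix x assume "x \<in> clause_branch i"
    moreover from this have "is_Cyc x" using cyc by blast
    ultimately obtain j t where "x = Cyc j t" "j \<in> cl i" by (rule clause_branch_CycE)
    then show "var_of x \<in> cl i" by simp
  qed
  have "card (var_of ` clause_branch i) = card (clause_branch i)"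
    using card_image[OF var_of_inj_on_clause_branch[OF cyc]] .
  then have "var_of ` clause_branch i = cl i"
    using card_seteq[OF finite_clause[OF i] sub] card_clause[OF i] big by simp
  have "\<forall>k\<in>cl i. Tri i k \<notin> branch"
  proof (intro ballI notI)
    fix k assume "Tri i k \<in> branch"
    then have "Tri i k \<in> clause_branch i" unfolding clause_branch_def by simp
    then show False using cyc by fastforce
  qed
  moreover have "\<forall>j\<in>cl i. \<exists>t. ord j t = i \<and> Cyc j t \<in> branch \<and> branch_degree (Cyc j t) = 4"
  proof
    fix j assume "j \<in> cl i"
    then obtain x where x: "x \<in> clause_branch i" "var_of x = j"
      using \<open>var_of ` clause_branch i = cl i\<close> by (metis imageE)
    moreover from this have "is_Cyc x" using cyc by blast
    ultimately obtain j' t where jt: "x = Cyc j' t" "ord j' t = i"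
      using clause_branch_CycE[of x i] by blast
    with x(2) have "x = Cyc j t" "ord j t = i" by auto
    moreover have "x \<in> branch" "branch_degree x = 4"
      using x(1) sat unfolding clause_branch_def saturated_def by auto
    ultimately show "\<exists>t. ord j t = i \<and> Cyc j t \<in> branch \<and> branch_degree (Cyc j t) = 4" by auto
  qed
  ultimately show False using no_saturated_clause[OF i] by blast
qed

lemma clause_bound:
  assumes i: "i < m" and m: "3 \<le> m"
  shows "(2 * m + 1) * card (clause_half_edges i) \<le> 10 + 10 * m * card (clause_branch i) \<and>
    ((2 * m + 1) * card (clause_half_edges i) = 10 + 10 * m * card (clause_branch i) \<longrightarrow>
      card (clause_branch i) = 2 \<and> (\<forall>x\<in>clause_branch i. saturated x))"
proof -
  let ?X = "clause_branch i"
  have le4: "branch_degree x \<le> 4" if "x \<in> ?X" for x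
    using branch_degree_bound[of x] that unfolding clause_branch_def by (auto split: if_splits)
  then have s: "(\<Sum>x\<in>?X. branch_degree x) \<le> 4 * card ?X"
    using sum_bounded_above[of ?X branch_degree 4] by simp
  have sat: "\<forall>x\<in>?X. saturated x" if "(\<Sum>x\<in>?X. branch_degree x) = 4 * card ?X"
  proof
    fix x assume x: "x \<in> ?X"
    have "(\<Sum>x\<in>?X. branch_degree x) = (\<Sum>x\<in>?X. 4)" using that by (simp add: mult.commute)
    then have "branch_degree x = 4" using sum_mono_inv[OF _ le4 x finite_clause_branch] by simp
    moreover have "x \<in> branch" "x \<noteq> Apex" using x unfolding clause_branch_def by auto
    ultimately show "saturated x" using branch_degree_bound[of x] unfolding saturated_def
      by (cases "is_Cyc x") auto
  qed
  have "(\<Sum>x\<in>?X. branch_degree x) = 4 * card ?X \<Longrightarrow> card ?X \<le> 2"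
    using card_saturated_clause_branch[OF i] sat by blast
  from clause_count_arith[OF m card_clause_half_edges_le card_apex_half_edges_le_clause_branch
      card_apex_half_edges_le_3[OF i] s this]
  show ?thesis using sat by blast
qed

text \<open>Without the apex every branch vertex has degree at most 4, so \<open>H\<close> has density at most 2,
  which is less than \<open>5m/(2m+1)\<close> once \<open>m \<ge> 3\<close>.\<close>

lemma apex_in_branch:
  assumes VH: "0 < card VH" and m: "3 \<le> m" and dens: "card EH * (2 * m + 1) = 5 * m * card VH"
  shows "Apex \<in> branch"
proof (rule ccontr)
  assume no_apex: "Apex \<notin> branch"
  have "branch_degree x \<le> 4" if "x \<in> branch" for x
  proof -
    have "x \<noteq> Apex" using that no_apex by blast
    then show ?thesis using branch_degree_bound[OF that] by (simp split: if_splits)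
  qed
  then have "2 * card EH \<le> 4 * card VH"
    using sum_bounded_above[of branch branch_degree 4] card_half_edges
      card_half_edges_eq_sum_branch_degree card_branch by simp
  then have le: "(2 * m + 1) * (2 * card EH) \<le> (2 * m + 1) * (4 * card VH)" by (rule mult_le_mono2)
  have "(2 * m + 1) * (2 * card EH) = 2 * (card EH * (2 * m + 1))" by (simp add: algebra_simps)
  also have "\<dots> = (10 * m) * card VH" using dens by simp
  finally have "(10 * m) * card VH \<le> (8 * m + 4) * card VH"
    using le by (simp add: algebra_simps)
  then have "10 * m \<le> 8 * m + 4" using VH mult_le_cancel2 by blast
  then show False using m by simp
qed

text \<open>Summed over all clauses, the bounds of \<open>clause_bound\<close> add up to exactly the density,
  so each of them is attained.\<close>

lemma clause_branch_saturated:
  assumes m: "0 < m" and VH: "0 < card VH" and dens: "card EH * (2 * m + 1) = 5 * m * card VH"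
    and i: "i < m"
  shows "card (clause_branch i) = 2 \<and> (\<forall>x\<in>clause_branch i. saturated x)"
proof -
  have m3: "3 \<le> m" using three_le_clauses m .
  let ?a = "\<lambda>i. (2 * m + 1) * card (clause_half_edges i)"
  let ?b = "\<lambda>i. 10 + 10 * m * card (clause_branch i)"
  have "(\<Sum>i<m. ?a i) = (2 * m + 1) * (2 * card EH)"
    using card_half_edges_eq_sum_clauses card_half_edges by (simp add: sum_distrib_left)
  also have "\<dots> = 10 * m * card VH" using dens by (simp add: algebra_simps)
  also have "\<dots> = 10 * m * (1 + (\<Sum>i<m. card (clause_branch i)))"
    using card_branch_eq_sum_clauses[OF apex_in_branch[OF VH m3 dens]] card_branch by simp
  also have "\<dots> = (\<Sum>i<m. ?b i)" by (simp add: sum.distrib sum_distrib_left algebra_simps)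
  finally have "?a i = ?b i"
    using sum_mono_inv[where f = ?a and g = ?b and I = "{..<m}" and i = i] clause_bound[OF _ m3] i
    by simp
  then show ?thesis using clause_bound[OF i m3] by simp
qed

lemma branch_saturated:
  assumes "0 < m" "0 < card VH" "card EH * (2 * m + 1) = 5 * m * card VH"
    and "x \<in> branch" "x \<noteq> Apex"
  shows "saturated x"
proof -
  have "x \<in> clause_branch (clause_of x)" using assms(4,5) unfolding clause_branch_def by simp
  then show ?thesis
    using clause_branch_saturated[OF assms(1-3) branch_clause_less[OF assms(4,5)]] by blast
qed

lemma Cyc_branch_rotate:
  assumes sat: "\<And>x. x \<in> branch \<Longrightarrow> x \<noteq> Apex \<Longrightarrow> saturated x" and "Cyc j t \<in> branch"
  shows "Cyc j ((t + k) mod deg m cl j) \<in> branch"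
proof (induction k)
  case 0
  then show ?case using assms(2) Cyc_branch_bounds[OF assms(2)] by simp
next
  case (Suc k)
  have "SubC j ((t + k) mod deg m cl j) s \<notin> branch" for s
    using sat[of "SubC j ((t + k) mod deg m cl j) s"] unfolding saturated_def by auto
  then have "Cyc j (((t + k) mod deg m cl j + 1) mod deg m cl j) \<in> branch"
    using saturated_cycle_successor Suc.IH sat unfolding saturated_def by simp
  then show ?case by (simp add: mod_Suc_eq)
qed

lemma Cyc_branch_iff:
  assumes sat: "\<And>x. x \<in> branch \<Longrightarrow> x \<noteq> Apex \<Longrightarrow> saturated x" and t: "t < deg m cl j"
  shows "Cyc j t \<in> branch \<longleftrightarrow> Cyc j 0 \<in> branch"
proof
  assume "Cyc j t \<in> branch"
  then show "Cyc j 0 \<in> branch" using Cyc_branch_rotate[OF sat, of j t "deg m cl j - t"] t by simp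
next
  assume "Cyc j 0 \<in> branch"
  then show "Cyc j t \<in> branch" using Cyc_branch_rotate[OF sat, of j 0 t] t by simp
qed

lemma card_clause_vars_outside_branch:
  assumes "0 < m" "0 < card VH" "card EH * (2 * m + 1) = 5 * m * card VH" and i: "i < m"
  shows "card {j \<in> cl i. Cyc j 0 \<notin> branch} = 1"
proof -
  have sat: "\<And>x. x \<in> branch \<Longrightarrow> x \<noteq> Apex \<Longrightarrow> saturated x" using branch_saturated[OF assms(1-3)] .
  have X: "card (clause_branch i) = 2" "\<forall>x\<in>clause_branch i. is_Cyc x"
    using clause_branch_saturated[OF assms(1-3) i] unfolding saturated_def by auto
  have "var_of ` clause_branch i = {j \<in> cl i. Cyc j 0 \<in> branch}"
  proof
    show "var_of ` clause_branch i \<subseteq> {j \<in> cl i. Cyc j 0 \<in> branch}"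
    proof (rule image_subsetI)
      fix x assume x: "x \<in> clause_branch i"
      then obtain j t where jt: "x = Cyc j t" "t < deg m cl j" "j \<in> cl i"
        using clause_branch_CycE[OF x] X(2) by blast
      then have "Cyc j t \<in> branch" using x unfolding clause_branch_def by simp
      then show "var_of x \<in> {j \<in> cl i. Cyc j 0 \<in> branch}"
        using Cyc_branch_iff[OF sat jt(2)] jt by simp
    qed
    show "{j \<in> cl i. Cyc j 0 \<in> branch} \<subseteq> var_of ` clause_branch i"
    proof
      fix j assume "j \<in> {j \<in> cl i. Cyc j 0 \<in> branch}"
      then have j: "j \<in> cl i" "Cyc j 0 \<in> branch" by simp_all
      obtain t where t: "t < deg m cl j" "ord j t = i" using ord_surj[OF i j(1)] by blast
      then have "Cyc j t \<in> clause_branch i"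
        using Cyc_branch_iff[OF sat t(1)] j(2) unfolding clause_branch_def by simp
      then show "j \<in> var_of ` clause_branch i" by (rule rev_image_eqI) simp
    qed
  qed
  then have "card {j \<in> cl i. Cyc j 0 \<in> branch} = 2"
    using card_image[OF var_of_inj_on_clause_branch[OF X(2)]] X(1) by simp
  moreover have "{j \<in> cl i. Cyc j 0 \<notin> branch} = cl i - {j \<in> cl i. Cyc j 0 \<in> branch}" by auto
  ultimately show ?thesis
    using card_Diff_subset[of "{j \<in> cl i. Cyc j 0 \<in> branch}" "cl i"] finite_clause[OF i]
      card_clause[OF i] by simp
qed

end

theorem lemma5:
  fixes m p :: nat and cl :: "nat \<Rightarrow> nat set" and ord :: "nat \<Rightarrow> nat \<Rightarrow> nat"
    and VH :: "'h set" and EH :: "'h set set"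
  assumes clauses: "\<forall>i<m. cl i \<subseteq> {..<p} \<and> card (cl i) = 3"
    and occ: "\<forall>j<p. 3 \<le> deg m cl j"
    and cyc: "\<forall>j<p. bij_betw (ord j) {..<deg m cl j} {i. i < m \<and> j \<in> cl i}"
    and H: "simple_graph VH EH"
    and minor: "one_shallow_top_minor VH EH (G_verts m p cl) (G_edges m p cl ord)"
    and dens: "density VH EH = 5 * real m / (2 * real m + 1)"
  shows "\<exists>\<tau> :: nat \<Rightarrow> bool. \<forall>i<m. card {j \<in> cl i. \<tau> j} = 1"
proof (cases "m = 0")
  case False
  obtain \<phi> P where "shallow_embedding VH EH (G_verts m p cl) (G_edges m p cl ord) \<phi> P"
    using one_shallow_top_minorE[OF minor H] .
  moreover have "positive_3cnf m p cl ord" using clauses occ cyc by unfold_locales blast+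
  ultimately interpret reduction_embedding m p cl ord VH EH \<phi> P
    by (simp add: reduction_embedding_def)
  have "0 < 5 * real m / (2 * real m + 1)" using False by simp
  then have VH: "0 < card VH" using dens unfolding density_def by (cases "card VH = 0") auto
  then have "real (card EH) * (2 * real m + 1) = 5 * real m * real (card VH)"
    using dens unfolding density_def by (simp add: field_simps)
  then have "real (card EH * (2 * m + 1)) = real (5 * m * card VH)" by (simp add: algebra_simps)
  then have "card EH * (2 * m + 1) = 5 * m * card VH" by (simp only: of_nat_eq_iff)
  then have "\<forall>i<m. card {j \<in> cl i. Cyc j 0 \<notin> branch} = 1"
    using card_clause_vars_outside_branch[OF _ VH] False by simp
  then show ?thesis by (intro exI[of _ "\<lambda>j. Cyc j 0 \<notin> branch"])
qed simp

end
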